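(* For every $f\in\mathcal{R}$ there exists $g\in\mathcal{R}$ such that $g=(f,g)$.
   Context: $\mathcal{R}$ is the group of rational homeomorphisms of $\{0,1\}^\omega$: those $f$ for which there is a finite asynchronous binary transducer $(S,s_0,t,o)$ ($S$ finite, $t\colon S\times\{0,1\}\to S$, $o\colon S\times\{0,1\}\to\{0,1\}^*$) with $f(\psi)=o(s_0,\psi)$, where for $\sigma_1\sigma_2\cdots$ one sets $s_1=s_0$, $s_{n+1}=t(s_n,\sigma_n)$ and $o(s_0,\sigma_1\sigma_2\cdots)=o(s_1,\sigma_1)o(s_2,\sigma_2)\cdots$. For homeomorphisms $f,g$, $(f,g)$ denotes the homeomorphism with $(f,g)(0\zeta)=0f(\zeta)$ and $(f,g)(1\zeta)=1g(\zeta)$ for all $\zeta\in\{0,1\}^\omega$. *)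

theory Defs
  imports "HOL-Analysis.Analysis"
begin

text \<open>Cantor space \<open>{0,1}^\<omega>\<close> is modelled as \<open>nat \<Rightarrow> bool\<close> (0 = False, 1 = True)
  with the product of discrete topologies.\<close>

definition cantor_top :: "(nat \<Rightarrow> bool) topology" where
  "cantor_top = product_topology (\<lambda>_. discrete_topology UNIV) UNIV"

text \<open>State sequence of a transducer on input \<open>\<psi>\<close>: \<open>tr_state t s0 \<psi> n\<close> is \<open>s_{n+1}\<close>.\<close>
fun tr_state :: "('s \<Rightarrow> bool \<Rightarrow> 's) \<Rightarrow> 's \<Rightarrow> (nat \<Rightarrow> bool) \<Rightarrow> nat \<Rightarrow> 's" where
  "tr_state t s0 \<psi> 0 = s0"
| "tr_state t s0 \<psi> (Suc n) = t (tr_state t s0 \<psi> n) (\<psi> n)"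

definition tr_out :: "('s \<Rightarrow> bool \<Rightarrow> 's) \<Rightarrow> ('s \<Rightarrow> bool \<Rightarrow> bool list) \<Rightarrow> 's
     \<Rightarrow> (nat \<Rightarrow> bool) \<Rightarrow> nat \<Rightarrow> bool list" where
  "tr_out t out s0 \<psi> n = concat (map (\<lambda>i. out (tr_state t s0 \<psi> i) (\<psi> i)) [0..<n])"

text \<open>The infinite concatenation \<open>o(s_0,\<psi>)\<close> equals the infinite word \<open>\<zeta>\<close>:
  every finite partial output is a prefix of \<open>\<zeta>\<close>, and the partial outputs have unbounded length.\<close>
definition tr_output_is :: "('s \<Rightarrow> bool \<Rightarrow> 's) \<Rightarrow> ('s \<Rightarrow> bool \<Rightarrow> bool list) \<Rightarrow> 's
     \<Rightarrow> (nat \<Rightarrow> bool) \<Rightarrow> (nat \<Rightarrow> bool) \<Rightarrow> bool" where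
  "tr_output_is t out s0 \<psi> \<zeta> \<longleftrightarrow>
     (\<forall>n. \<forall>i < length (tr_out t out s0 \<psi> n). tr_out t out s0 \<psi> n ! i = \<zeta> i) \<and>
     (\<forall>m. \<exists>n. m \<le> length (tr_out t out s0 \<psi> n))"

text \<open>Finite asynchronous binary transducer; the finite state set is taken as a finite
  subset \<open>S\<close> of \<open>nat\<close> (no loss of generality).\<close>
definition rational_map :: "((nat \<Rightarrow> bool) \<Rightarrow> (nat \<Rightarrow> bool)) \<Rightarrow> bool" where
  "rational_map f \<longleftrightarrow> (\<exists>(S::nat set) s0 t out. finite S \<and> s0 \<in> S \<and>
      (\<forall>s\<in>S. \<forall>b. t s b \<in> S) \<and> (\<forall>\<psi>. tr_output_is t out s0 \<psi> (f \<psi>)))"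

definition RatHomeo :: "((nat \<Rightarrow> bool) \<Rightarrow> (nat \<Rightarrow> bool)) set" where
  "RatHomeo = {f. homeomorphic_map cantor_top cantor_top f \<and> rational_map f}"

text \<open>\<open>(f,g)\<close>: \<open>(f,g)(0\<zeta>) = 0 f(\<zeta>)\<close>, \<open>(f,g)(1\<zeta>) = 1 g(\<zeta>)\<close>.\<close>
definition pairH :: "((nat \<Rightarrow> bool) \<Rightarrow> (nat \<Rightarrow> bool)) \<Rightarrow> ((nat \<Rightarrow> bool) \<Rightarrow> (nat \<Rightarrow> bool))
     \<Rightarrow> (nat \<Rightarrow> bool) \<Rightarrow> (nat \<Rightarrow> bool)" where
  "pairH f g \<psi> = case_nat (\<psi> 0) ((if \<psi> 0 then g else f) (\<psi> \<circ> Suc))"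

end

theory Submission
  imports Defs "HOL-Library.Omega_Words_Fun"
begin

text \<open>Unwinding \<open>g = (f, g)\<close> forces \<open>g(1\<^sup>\<omega>) = 1\<^sup>\<omega>\<close> and \<open>g(1\<^sup>n 0 \<zeta>) = 1\<^sup>n 0 f(\<zeta>)\<close>, and this map
  is indeed a fixed point. It is computed by the transducer of \<open>f\<close> preceded by one extra state
  that copies the leading \<open>1\<close>s and the first \<open>0\<close>. Since \<open>g\<close> depends functorially on \<open>f\<close>, it is
  a bijection whenever \<open>f\<close> is; being rational it is continuous, hence a homeomorphism of the
  compact Hausdorff Cantor space.\<close>

lemma topspace_cantor_top [simp]: "topspace cantor_top = UNIV"
  by (simp add: cantor_top_def topspace_product_topology)

lemma openin_cantor_top_cylinder: "openin cantor_top {\<phi>. \<forall>j<N. \<phi> j = \<psi> j}"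
proof (induction N)
  case 0
  then show ?case
    using openin_topspace[of cantor_top] by simp
next
  case (Suc N)
  have "continuous_map cantor_top (discrete_topology UNIV) (\<lambda>\<phi>. \<phi> N)"
    unfolding cantor_top_def by (rule continuous_map_product_projection) simp
  then have "openin cantor_top {\<phi> \<in> topspace cantor_top. \<phi> N \<in> {\<psi> N}}"
    by (rule openin_continuous_map_preimage) simp
  then have "openin cantor_top ({\<phi>. \<forall>j<N. \<phi> j = \<psi> j} \<inter> {\<phi> \<in> topspace cantor_top. \<phi> N \<in> {\<psi> N}})"
    by (rule openin_Int[OF Suc.IH])
  moreover have "{\<phi>. \<forall>j<Suc N. \<phi> j = \<psi> j} =
      {\<phi>. \<forall>j<N. \<phi> j = \<psi> j} \<inter> {\<phi> \<in> topspace cantor_top. \<phi> N \<in> {\<psi> N}}"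
    by (auto simp: less_Suc_eq)
  ultimately show ?case
    by simp
qed

lemma compact_space_cantor_top: "compact_space cantor_top"
  by (simp add: cantor_top_def compact_space_product_topology compact_space_discrete_topology)

lemma Hausdorff_space_cantor_top: "Hausdorff_space cantor_top"
  by (simp add: cantor_top_def Hausdorff_space_product_topology)

lemma continuous_map_cantor_top_if_locally_determined:
  assumes "\<And>\<psi> i. \<exists>N. \<forall>\<phi>. (\<forall>j<N. \<phi> j = \<psi> j) \<longrightarrow> h \<phi> i = h \<psi> i"
  shows "continuous_map cantor_top cantor_top h"
proof -
  have "openin cantor_top {\<phi>. h \<phi> i \<in> U}" for i U
  proof (subst openin_subopen, intro ballI)
    fix \<psi> assume \<psi>: "\<psi> \<in> {\<phi>. h \<phi> i \<in> U}"
    obtain N where N: "\<forall>\<phi>. (\<forall>j<N. \<phi> j = \<psi> j) \<longrightarrow> h \<phi> i = h \<psi> i"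
      using assms by blast
    have "{\<phi>. \<forall>j<N. \<phi> j = \<psi> j} \<subseteq> {\<phi>. h \<phi> i \<in> U}"
    proof
      fix \<phi> assume "\<phi> \<in> {\<phi>. \<forall>j<N. \<phi> j = \<psi> j}"
      then have "h \<phi> i = h \<psi> i"
        using N by blast
      then show "\<phi> \<in> {\<phi>. h \<phi> i \<in> U}"
        using \<psi> by simp
    qed
    then show "\<exists>T. openin cantor_top T \<and> \<psi> \<in> T \<and> T \<subseteq> {\<phi>. h \<phi> i \<in> U}"
      using openin_cantor_top_cylinder[of N \<psi>] by blast
  qed
  then have "continuous_map cantor_top (discrete_topology UNIV) (\<lambda>\<phi>. h \<phi> i)" for i
    unfolding continuous_map_def by simp
  then show ?thesis
    unfolding cantor_top_def continuous_map_componentwise_UNIV by blast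
qed

lemma tr_out_0 [simp]: "tr_out t out s0 \<psi> 0 = []"
  by (simp add: tr_out_def)

lemma tr_out_Suc:
  "tr_out t out s0 \<psi> (Suc n) = tr_out t out s0 \<psi> n @ out (tr_state t s0 \<psi> n) (\<psi> n)"
  by (simp add: tr_out_def)

lemma tr_state_add: "tr_state t s0 \<psi> (k + m) = tr_state t (tr_state t s0 \<psi> k) (suffix k \<psi>) m"
  by (induction m) simp_all

lemma tr_out_add:
  "tr_out t out s0 \<psi> (k + m) =
     tr_out t out s0 \<psi> k @ tr_out t out (tr_state t s0 \<psi> k) (suffix k \<psi>) m"
  by (induction m) (simp_all add: tr_out_Suc tr_state_add suffix_def)

lemma tr_out_cong:
  "(\<forall>j<N. \<phi> j = \<psi> j) \<Longrightarrow> k \<le> N \<Longrightarrow> tr_out t out s0 \<phi> k = tr_out t out s0 \<psi> k"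
proof (induction k)
  case (Suc k)
  have "tr_state t s0 \<phi> k = tr_state t s0 \<psi> k" if "k \<le> N" for k
    using that Suc.prems(1) by (induction k) auto
  then show ?case
    using Suc by (simp add: tr_out_Suc)
qed simp

lemma tr_output_is_conc:
  assumes "tr_output_is t out (tr_state t s0 \<psi> k) (suffix k \<psi>) \<eta>"
  shows "tr_output_is t out s0 \<psi> (tr_out t out s0 \<psi> k \<frown> \<eta>)"
  unfolding tr_output_is_def
proof (intro conjI allI impI)
  fix n i
  assume i: "i < length (tr_out t out s0 \<psi> n)"
  let ?w = "tr_out t out s0 \<psi> k" and ?v = "tr_out t out (tr_state t s0 \<psi> k) (suffix k \<psi>) n"
  have "tr_out t out s0 \<psi> (n + k) =
      tr_out t out s0 \<psi> n @ tr_out t out (tr_state t s0 \<psi> n) (suffix n \<psi>) k"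
    by (rule tr_out_add)
  moreover have "tr_out t out s0 \<psi> (n + k) = ?w @ ?v"
    by (simp add: add.commute tr_out_add)
  ultimately have "tr_out t out s0 \<psi> n ! i = (?w @ ?v) ! i" and "i < length (?w @ ?v)"
    using i by (metis nth_append_left, metis length_append trans_less_add1)
  then show "tr_out t out s0 \<psi> n ! i = (?w \<frown> \<eta>) i"
    using assms unfolding tr_output_is_def by (simp add: nth_append conc_def)
next
  fix m
  obtain n where "m \<le> length (tr_out t out (tr_state t s0 \<psi> k) (suffix k \<psi>) n)"
    using assms unfolding tr_output_is_def by blast
  then show "\<exists>n. m \<le> length (tr_out t out s0 \<psi> n)"
    by (intro exI[of _ "k + n"]) (simp add: tr_out_add)
qed

lemma rational_map_locally_determined:
  assumes "rational_map h"
  shows "\<exists>N. \<forall>\<phi>. (\<forall>j<N. \<phi> j = \<psi> j) \<longrightarrow> h \<phi> i = h \<psi> i"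
proof -
  obtain s0 t out where h: "\<And>\<psi>. tr_output_is t out (s0::nat) \<psi> (h \<psi>)"
    using assms unfolding rational_map_def by blast
  then have nth_tr_out: "i < length (tr_out t out s0 \<psi> N) \<Longrightarrow> tr_out t out s0 \<psi> N ! i = h \<psi> i"
    for \<psi> N by (simp add: tr_output_is_def)
  obtain N where N: "i < length (tr_out t out s0 \<psi> N)"
    using h[of \<psi>] unfolding tr_output_is_def by (meson Suc_le_eq)
  have "h \<phi> i = h \<psi> i" if "\<forall>j<N. \<phi> j = \<psi> j" for \<phi>
    using nth_tr_out[OF N] nth_tr_out[of \<phi> N] N tr_out_cong[OF that order_refl, of t out s0] by simp
  then show ?thesis
    by blast
qed

lemma continuous_map_rational: "rational_map h \<Longrightarrow> continuous_map cantor_top cantor_top h"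
  by (intro continuous_map_cantor_top_if_locally_determined rational_map_locally_determined)

text \<open>State \<open>0\<close> copies the input up to and including the first \<open>0\<close>, then hands over to
  \<open>s0\<close>; state \<open>Suc s\<close> behaves as state \<open>s\<close> of the given transducer.\<close>

definition copy_ones_trans :: "(nat \<Rightarrow> bool \<Rightarrow> nat) \<Rightarrow> nat \<Rightarrow> nat \<Rightarrow> bool \<Rightarrow> nat" where
  "copy_ones_trans t s0 = case_nat (\<lambda>b. if b then 0 else Suc s0) (\<lambda>s b. Suc (t s b))"

definition copy_ones_out :: "(nat \<Rightarrow> bool \<Rightarrow> bool list) \<Rightarrow> nat \<Rightarrow> bool \<Rightarrow> bool list" where
  "copy_ones_out out = case_nat (\<lambda>b. [b]) out"

lemma tr_state_copy_ones_Suc: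
  "tr_state (copy_ones_trans t s0) (Suc s) \<psi> k = Suc (tr_state t s \<psi> k)"
  by (induction k) (simp_all add: copy_ones_trans_def)

lemma tr_output_is_copy_ones_Suc:
  "tr_output_is (copy_ones_trans t s0) (copy_ones_out out) (Suc s) = tr_output_is t out s"
proof -
  have "tr_out (copy_ones_trans t s0) (copy_ones_out out) (Suc s) \<psi> k = tr_out t out s \<psi> k" for \<psi> k
    by (simp add: tr_out_def tr_state_copy_ones_Suc copy_ones_out_def)
  then show ?thesis
    by (intro ext) (simp add: tr_output_is_def)
qed

lemma tr_copy_ones_leading_ones:
  assumes "\<forall>j<k. \<psi> j"
  shows "tr_state (copy_ones_trans t s0) 0 \<psi> k = 0"
    and "tr_out (copy_ones_trans t s0) (copy_ones_out out) 0 \<psi> k = replicate k True"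
  using assms
  by (induction k) (simp_all add: tr_out_Suc copy_ones_trans_def copy_ones_out_def replicate_append_same)

lemma bool_word_cases:
  obtains "\<forall>i. \<psi> i" | n \<zeta> where "\<psi> = replicate n True \<frown> False ## \<zeta>"
proof (cases "\<forall>i. \<psi> i")
  case False
  then obtain u a v where \<psi>: "\<psi> = u \<frown> [a] \<frown> v" and "False \<notin> set u" and "a = False"
    using word_first_split_set[of "{False}" \<psi>] by auto
  then have "u = replicate (length u) True"
    by (metis (full_types) replicate_length_same)
  then have "\<psi> = replicate (length u) True \<frown> False ## v"
    using \<psi> \<open>a = False\<close> by simp
  then show thesis
    using that(2) by blast
qed

lemma first_False_leading_ones: "(LEAST i. \<not> (replicate n True \<frown> False ## \<zeta>) i) = n"
  by (rule Least_equality) (auto simp: conc_def nth_replicate split: if_splits)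

lemma suffix_Suc_0_build [simp]: "suffix (Suc 0) (a ## w) = w"
  by (rule ext) simp

definition pairH_fix :: "((nat \<Rightarrow> bool) \<Rightarrow> (nat \<Rightarrow> bool)) \<Rightarrow> (nat \<Rightarrow> bool) \<Rightarrow> (nat \<Rightarrow> bool)" where
  "pairH_fix f \<psi> =
     (if \<forall>i. \<psi> i then \<psi>
      else let n = LEAST i. \<not> \<psi> i in replicate n True \<frown> False ## f (suffix (Suc n) \<psi>))"

lemma pairH_fix_all_True: "\<forall>i. \<psi> i \<Longrightarrow> pairH_fix f \<psi> = \<psi>"
  by (simp add: pairH_fix_def)

lemma pairH_fix_leading_ones:
  "pairH_fix f (replicate n True \<frown> False ## \<zeta>) = replicate n True \<frown> False ## f \<zeta>"
proof -
  have "\<not> (\<forall>i. (replicate n True \<frown> False ## \<zeta>) i)"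
    by (metis conc_snd build.simps(1) diff_self_eq_0 length_replicate less_irrefl)
  then have "pairH_fix f (replicate n True \<frown> False ## \<zeta>) =
      replicate n True \<frown> False ## f (suffix (Suc n) (replicate n True \<frown> False ## \<zeta>))"
    unfolding pairH_fix_def first_False_leading_ones by (simp only: if_False Let_def)
  then show ?thesis
    by simp
qed

lemma pairH_build: "pairH f g (a ## w) = a ## (if a then g else f) w"
proof -
  have "build a = case_nat a" for a :: bool
    by (intro ext, rename_tac w i, case_tac i) simp_all
  then show ?thesis
    by (simp add: pairH_def comp_def)
qed

lemma pairH_pairH_fix: "pairH f (pairH_fix f) = pairH_fix f"
proof
  fix \<psi>
  show "pairH f (pairH_fix f) \<psi> = pairH_fix f \<psi>"
  proof (cases \<psi> rule: bool_word_cases)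
    case 1
    have "pairH f (pairH_fix f) (True ## suffix 1 \<psi>) = True ## suffix 1 \<psi>"
      using 1 by (simp add: pairH_build pairH_fix_all_True)
    moreover have "\<psi> = True ## suffix 1 \<psi>"
      using 1 build_split[of \<psi>] by simp
    ultimately show ?thesis
      using 1 pairH_fix_all_True by metis
  next
    case (2 n \<zeta>)
    then have "pairH_fix f \<psi> = replicate n True \<frown> False ## f \<zeta>"
      by (simp only: pairH_fix_leading_ones)
    moreover have "pairH f (pairH_fix f) \<psi> = replicate n True \<frown> False ## f \<zeta>"
      using 2 pairH_fix_leading_ones[of f "n - 1" \<zeta>] by (cases n) (simp_all add: pairH_build)
    ultimately show ?thesis
      by simp
  qed
qed

lemma pairH_fix_comp: "pairH_fix g \<circ> pairH_fix f = pairH_fix (g \<circ> f)"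
proof
  fix \<psi>
  show "(pairH_fix g \<circ> pairH_fix f) \<psi> = pairH_fix (g \<circ> f) \<psi>"
    by (cases \<psi> rule: bool_word_cases) (simp_all add: pairH_fix_all_True pairH_fix_leading_ones)
qed

lemma pairH_fix_id: "pairH_fix id = id"
proof
  fix \<psi>
  show "pairH_fix id \<psi> = id \<psi>"
    by (cases \<psi> rule: bool_word_cases) (simp_all add: pairH_fix_all_True pairH_fix_leading_ones)
qed

lemma bij_pairH_fix:
  assumes "bij f"
  shows "bij (pairH_fix f)"
proof (rule o_bij)
  have "inv f \<circ> f = id" and "f \<circ> inv f = id"
    using assms by (simp_all add: bij_is_inj bij_is_surj flip: inj_iff surj_iff)
  then show "pairH_fix (inv f) \<circ> pairH_fix f = id" and "pairH_fix f \<circ> pairH_fix (inv f) = id"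
    by (simp_all add: pairH_fix_comp pairH_fix_id)
qed

lemma tr_output_is_pairH_fix:
  assumes "\<And>\<psi>. tr_output_is t out s0 \<psi> (f \<psi>)"
  shows "tr_output_is (copy_ones_trans t s0) (copy_ones_out out) 0 \<psi> (pairH_fix f \<psi>)"
proof (cases \<psi> rule: bool_word_cases)
  case 1
  then show ?thesis
    by (auto simp: tr_output_is_def tr_copy_ones_leading_ones pairH_fix_all_True)
next
  case (2 n \<zeta>)
  have ones: "\<forall>j<n. \<psi> j"
    using 2 by simp
  have "tr_state (copy_ones_trans t s0) 0 \<psi> (Suc n) = Suc s0"
    using 2 tr_copy_ones_leading_ones(1)[OF ones] by (simp add: copy_ones_trans_def)
  moreover have "tr_out (copy_ones_trans t s0) (copy_ones_out out) 0 \<psi> (Suc n) =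
      replicate n True @ [False]"
    using 2 tr_copy_ones_leading_ones[OF ones] by (simp add: tr_out_Suc copy_ones_out_def)
  ultimately show ?thesis
    using tr_output_is_conc[of "copy_ones_trans t s0" "copy_ones_out out" 0 \<psi> "Suc n" "f \<zeta>"]
    by (simp add: 2 assms tr_output_is_copy_ones_Suc pairH_fix_leading_ones)
qed

lemma rational_map_pairH_fix:
  assumes "rational_map f"
  shows "rational_map (pairH_fix f)"
proof -
  obtain S s0 t out where S: "finite S" "(s0::nat) \<in> S" "\<forall>s\<in>S. \<forall>b. t s b \<in> S"
    and f: "\<And>\<psi>. tr_output_is t out s0 \<psi> (f \<psi>)"
    using assms unfolding rational_map_def by blast
  show ?thesis
    unfolding rational_map_def
  proof (intro exI conjI)
    show "finite (insert 0 (Suc ` S))" and "0 \<in> insert 0 (Suc ` S)"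
      using S by simp_all
    show "\<forall>s\<in>insert 0 (Suc ` S). \<forall>b. copy_ones_trans t s0 s b \<in> insert 0 (Suc ` S)"
      using S by (auto simp: copy_ones_trans_def)
    show "\<forall>\<psi>. tr_output_is (copy_ones_trans t s0) (copy_ones_out out) 0 \<psi> (pairH_fix f \<psi>)"
      using tr_output_is_pairH_fix[OF f] by blast
  qed
qed

lemma homeomorphic_map_cantor_top_if_rational:
  assumes "bij h" and "rational_map h"
  shows "homeomorphic_map cantor_top cantor_top h"
  using assms continuous_map_rational compact_space_cantor_top Hausdorff_space_cantor_top
  by (intro continuous_imp_homeomorphic_map) (simp_all add: bij_def)

lemma pairH_fix_RatHomeo:
  assumes "f \<in> RatHomeo"
  shows "pairH_fix f \<in> RatHomeo"
proof -
  have hom: "homeomorphic_map cantor_top cantor_top f" and "rational_map f"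
    using assms by (simp_all add: RatHomeo_def)
  have "bij f"
    using homeomorphic_imp_surjective_map[OF hom] homeomorphic_imp_injective_map[OF hom]
    by (simp add: bij_def)
  then have "bij (pairH_fix f)" and "rational_map (pairH_fix f)"
    using \<open>rational_map f\<close> by (simp_all add: bij_pairH_fix rational_map_pairH_fix)
  then show ?thesis
    by (simp add: RatHomeo_def homeomorphic_map_cantor_top_if_rational)
qed

theorem lemma2p6:
  assumes "f \<in> RatHomeo"
  shows "\<exists>g \<in> RatHomeo. g = pairH f g"
proof
  show "pairH_fix f = pairH f (pairH_fix f)"
    by (rule pairH_pairH_fix[symmetric])
  show "pairH_fix f \<in> RatHomeo"
    using assms by (rule pairH_fix_RatHomeo)
qed

end
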